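(* Let $(\Omega,\rho)$ be a metric space, $\mathcal{F}\subseteq[0,1]^{\Omega}$ a class of measurable functions, and $\mathcal{D}$ a distribution over $\Omega\times[0,1]$ with marginal $\mu$ on $\Omega$ which is realizable by $\mathcal{F}$. Then for every $\delta\in(0,1)$ and $n\in\mathbb{N}$, with probability at least $1-\delta$ over $S\sim\mathcal{D}^n$, for all $f\in\mathcal{F}$: \[ L_\mathcal{D}(f) \leq 1.01\,L_S(f) +\inf_{\alpha\geq0}\left(\alpha+\frac{205\log \mathcal{N}_{[\,]}(\mathcal{F},L_1(\mu),\alpha)}{n}\right) +\frac{205\log(1/\delta)}{n}. \]
   Context: For measurable $f:\Omega\to[0,1]$, $L_\mathcal{D}(f):=\mathbb{E}_{(X,Y)\sim\mathcal{D}}|f(X)-Y|$ and, for $S=(X_i,Y_i)_{i=1}^n$, $L_S(f):=\frac1n\sum_{i=1}^n|f(X_i)-Y_i|$. $\mathcal{D}$ is realizable by $\mathcal{F}$ if there exists $f^*\in\mathcal{F}$ with $L_\mathcal{D}(f^* )=0$. A bracket $[l,u]$ ($l,u:\Omega\to[0,1]$) contains $f$ if $l\le f\le u$; it is an $\alpha$-bracket in $L_1(\mu)$ if $\int|u-l|d\mu\le\alpha$; $\mathcal{N}_{[\,]}(\mathcal{F},L_1(\mu),\alpha)$ is the minimal number of $\alpha$-brackets covering $\mathcal{F}$. *)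

theory Defs
  imports "HOL-Probability.Probability"
begin

definition pop_loss :: "('a \<times> real) measure \<Rightarrow> ('a \<Rightarrow> real) \<Rightarrow> real" where
  "pop_loss D f = (\<integral>z. \<bar>f (fst z) - snd z\<bar> \<partial>D)"

definition emp_loss :: "nat \<Rightarrow> (nat \<Rightarrow> 'a \<times> real) \<Rightarrow> ('a \<Rightarrow> real) \<Rightarrow> real" where
  "emp_loss n S f = (\<Sum>i<n. \<bar>f (fst (S i)) - snd (S i)\<bar>) / real n"

definition bracket_cover ::
  "'a::metric_space measure \<Rightarrow> ('a \<Rightarrow> real) set \<Rightarrow> real \<Rightarrow> (('a \<Rightarrow> real) \<times> ('a \<Rightarrow> real)) set \<Rightarrow> bool" where
  "bracket_cover \<mu> F \<alpha> B \<longleftrightarrow> finite B \<and>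
     (\<forall>(l,u)\<in>B. l \<in> borel_measurable borel \<and> u \<in> borel_measurable borel \<and>
        (\<forall>x. 0 \<le> l x \<and> l x \<le> 1 \<and> 0 \<le> u x \<and> u x \<le> 1) \<and>
        (\<integral>x. \<bar>u x - l x\<bar> \<partial>\<mu>) \<le> \<alpha>) \<and>
     (\<forall>f\<in>F. \<exists>(l,u)\<in>B. \<forall>x. l x \<le> f x \<and> f x \<le> u x)"

text \<open>Bracketing number N_[](F, L_1(mu), alpha): minimal size of such a cover
  (only meaningful when some finite cover exists).\<close>
definition bracketing_number ::
  "'a::metric_space measure \<Rightarrow> ('a \<Rightarrow> real) set \<Rightarrow> real \<Rightarrow> nat" where
  "bracketing_number \<mu> F \<alpha> = (LEAST k. \<exists>B. bracket_cover \<mu> F \<alpha> B \<and> card B = k)"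

text \<open>inf_{alpha >= 0} (alpha + c * log N(alpha) / n). Values alpha with no finite
  bracket cover give +infinity and thus do not affect the infimum; they are excluded.\<close>
definition bracket_complexity ::
  "'a::metric_space measure \<Rightarrow> ('a \<Rightarrow> real) set \<Rightarrow> real \<Rightarrow> nat \<Rightarrow> real" where
  "bracket_complexity \<mu> F c n =
     (INF \<alpha>\<in>{\<alpha>. 0 \<le> \<alpha> \<and> (\<exists>B. bracket_cover \<mu> F \<alpha> B)}.
        \<alpha> + c * ln (real (bracketing_number \<mu> F \<alpha>)) / real n)"

end

theory Submission imports Defs begin

text \<open>Each bracket [l, u] yields the loss z \<mapsto> distance of the label from [l(x), u(x)], which lies
  below the loss of every f in the bracket and above it up to the width u - l.  A multiplicative
  Chernoff bound for the lower tail of these finitely many [0,1]-valued losses, combined with a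
  union bound, gives L_D \<le> 1.01 L_S + 101 (ln N + ln(1/\<delta>))/n for the bracket losses; adding the
  width \<alpha> and choosing \<alpha> nearly optimal (the slack 104 ln(1/\<delta>)/n absorbs the gap to the
  infimum) yields the claim.\<close>

lemma exp_neg_div_100_le:
  fixes x :: real
  assumes "0 \<le> x" "x \<le> 1"
  shows "exp (- x / 100) \<le> 1 - x / 101"
proof -
  have cvx: "convex_on UNIV (\<lambda>x. exp ((1/100) * x))" by (rule convex_on_exp) simp
  have "exp ((1/100) * ((1 - x) * 0 + x * (-1))) \<le> (1 - x) * exp ((1/100) * 0) + x * exp ((1/100) * (-1))"
    using convex_onD[OF cvx, of x 0 "-1"] assms by simp
  hence chord: "exp (- x / 100) \<le> (1 - x) + x * exp (- 1/100)" by simp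
  have "1 + 1/100 \<le> exp (1/100::real)" using exp_ge_add_one_self[of "1/100::real"] by simp
  hence "inverse (exp (1/100)) \<le> inverse (1 + 1/100::real)" by (intro le_imp_inverse_le) auto
  hence "exp (- 1/100::real) \<le> 100/101" by (simp add: exp_minus[symmetric])
  hence "x * exp (- 1/100) \<le> x * (100/101)" using assms by (intro mult_left_mono) auto
  thus ?thesis using chord by simp
qed

lemma integral_exp_neg_div_100_le:
  fixes g :: "'b \<Rightarrow> real"
  assumes D: "prob_space D" and g[measurable]: "g \<in> borel_measurable D"
    and g_range: "\<And>z. 0 \<le> g z \<and> g z \<le> 1"
  shows "(\<integral>z. exp (- g z / 100) \<partial>D) \<le> exp (- (\<integral>z. g z \<partial>D) / 101)"
proof -
  interpret D: prob_space D by (rule D)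
  have int_g: "integrable D g"
    by (rule D.integrable_const_bound[where B=1]) (use g_range in auto)
  have int_exp: "integrable D (\<lambda>z. exp (- g z / 100))"
    by (rule D.integrable_const_bound[where B=1]) (use g_range in auto)
  have "(\<integral>z. exp (- g z / 100) \<partial>D) \<le> (\<integral>z. 1 - g z / 101 \<partial>D)"
    by (intro integral_mono int_exp) (use int_g exp_neg_div_100_le g_range in auto)
  also have "\<dots> = 1 - (\<integral>z. g z \<partial>D) / 101" using int_g by (simp add: D.prob_space)
  also have "\<dots> \<le> exp (- (\<integral>z. g z \<partial>D) / 101)"
    using exp_ge_add_one_self[of "- (\<integral>z. g z \<partial>D) / 101"] by simp
  finally show ?thesis .
qed

lemma emeasure_PiM_sum_less_le:
  fixes g :: "'b \<Rightarrow> real"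
  assumes D: "prob_space D" and g[measurable]: "g \<in> borel_measurable D"
    and g_range: "\<And>z. 0 \<le> g z \<and> g z \<le> 1"
  shows "emeasure (PiM {..<n} (\<lambda>_. D)) {S\<in>space (PiM {..<n} (\<lambda>_. D)). (\<Sum>i<n. g (S i)) < T}
          \<le> ennreal (exp (T/100 - real n * (\<integral>z. g z \<partial>D) / 101))"
proof -
  interpret D: prob_space D by (rule D)
  interpret P: product_sigma_finite "\<lambda>_. D"
    by (simp add: product_sigma_finite_def D.sigma_finite_measure_axioms)
  define M where "M = PiM {..<n} (\<lambda>_. D)"
  define A where "A = {S\<in>space M. (\<Sum>i<n. g (S i)) < T}"
  define v where "v = (\<integral>z. exp (- g z / 100) \<partial>D)"
  have A: "A \<in> sets M" unfolding A_def M_def by measurable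
  have v_nonneg: "0 \<le> v" unfolding v_def by (intro integral_nonneg_AE) auto
  have int_exp: "integrable D (\<lambda>z. exp (- g z / 100))"
    by (rule D.integrable_const_bound[where B=1]) (use g_range in auto)
  have "(\<integral>\<^sup>+z. ennreal (exp (- g z / 100)) \<partial>D) = ennreal v"
    unfolding v_def by (rule nn_integral_eq_integral[OF int_exp]) auto
  hence nn_v: "(\<integral>\<^sup>+S. (\<Prod>i<n. ennreal (exp (- g (S i) / 100))) \<partial>M) = ennreal (v ^ n)"
    unfolding M_def using P.product_nn_integral_prod[of "{..<n}" "\<lambda>_ z. ennreal (exp (- g z / 100))"]
      v_nonneg by (simp add: ennreal_power)
  \<comment> \<open>Markov's inequality for exp((T - \<Sum>g)/100), which factorises over the coordinates.\<close>
  have indicator_le: "indicator A S \<le> ennreal (exp (T/100)) * (\<Prod>i<n. ennreal (exp (- g (S i) / 100)))"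
    for S
  proof (cases "S \<in> A")
    case True
    hence "0 \<le> T/100 + (\<Sum>i<n. - g (S i) / 100)"
      unfolding A_def by (simp add: sum_negf sum_divide_distrib[symmetric])
    hence "1 \<le> exp (T/100 + (\<Sum>i<n. - g (S i) / 100))" by simp
    thus ?thesis using True
      by (simp add: prod_ennreal exp_sum[symmetric] ennreal_mult[symmetric] exp_add)
  qed simp
  have "emeasure M A = (\<integral>\<^sup>+S. indicator A S \<partial>M)" using A by simp
  also have "\<dots> \<le> (\<integral>\<^sup>+S. ennreal (exp (T/100)) * (\<Prod>i<n. ennreal (exp (- g (S i) / 100))) \<partial>M)"
    using indicator_le by (intro nn_integral_mono)
  also have "\<dots> = ennreal (exp (T/100) * v ^ n)"
    using nn_v v_nonneg unfolding M_def
    by (subst nn_integral_cmult) (measurable, simp add: ennreal_mult)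
  also have "exp (T/100) * v ^ n \<le> exp (T/100) * exp (- (\<integral>z. g z \<partial>D) / 101) ^ n"
    using integral_exp_neg_div_100_le[OF D _ g_range] v_nonneg unfolding v_def
    by (intro mult_left_mono power_mono) auto
  also have "\<dots> = exp (T/100 - real n * (\<integral>z. g z \<partial>D) / 101)"
    by (simp add: exp_of_nat_mult[symmetric] exp_add[symmetric] exp_diff)
  finally show ?thesis unfolding M_def A_def by (simp add: ennreal_leI)
qed

lemma measure_PiM_mean_exceeds_empirical:
  fixes g :: "'b \<Rightarrow> real"
  assumes D: "prob_space D" and g[measurable]: "g \<in> borel_measurable D"
    and g_range: "\<And>z. 0 \<le> g z \<and> g z \<le> 1" and n: "n \<ge> 1"
  shows "measure (PiM {..<n} (\<lambda>_. D))
           {S\<in>space (PiM {..<n} (\<lambda>_. D)).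
              1.01 * (\<Sum>i<n. g (S i)) / real n + 101 * K / real n < (\<integral>z. g z \<partial>D)}
         \<le> exp (- K)"
proof -
  define M where "M = PiM {..<n} (\<lambda>_. D)"
  interpret M: prob_space M unfolding M_def by (intro prob_space_PiM D)
  define m where "m = (\<integral>z. g z \<partial>D)"
  define T where "T = 100 / 101 * (real n * m - 101 * K)"
  have "{S\<in>space M. 1.01 * (\<Sum>i<n. g (S i)) / real n + 101 * K / real n < m}
      = {S\<in>space M. (\<Sum>i<n. g (S i)) < T}"
    unfolding T_def using n by (auto simp: field_simps)
  moreover have "emeasure M {S\<in>space M. (\<Sum>i<n. g (S i)) < T} \<le> ennreal (exp (- K))"
    using emeasure_PiM_sum_less_le[OF D g g_range, of n T] unfolding M_def m_def T_def
    by (simp add: field_simps)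
  ultimately show ?thesis
    unfolding M_def[symmetric] m_def[symmetric] by (simp add: M.emeasure_eq_measure)
qed

lemma measure_PiM_uniform_mean_le_empirical:
  fixes g :: "'i \<Rightarrow> 'b \<Rightarrow> real"
  assumes D: "prob_space D" and I: "finite I"
    and g: "\<And>i. i \<in> I \<Longrightarrow> g i \<in> borel_measurable D"
    and g_range: "\<And>i z. i \<in> I \<Longrightarrow> 0 \<le> g i z \<and> g i z \<le> 1"
    and n: "n \<ge> 1" and \<delta>: "0 < \<delta>"
  defines "E \<equiv> {S\<in>space (PiM {..<n} (\<lambda>_. D)). \<forall>i\<in>I.
              (\<integral>z. g i z \<partial>D) \<le> 1.01 * (\<Sum>k<n. g i (S k)) / real n
                + 101 * (ln (card I) + ln (1 / \<delta>)) / real n}"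
  shows "E \<in> sets (PiM {..<n} (\<lambda>_. D))" and "measure (PiM {..<n} (\<lambda>_. D)) E \<ge> 1 - \<delta>"
proof -
  define M where "M = PiM {..<n} (\<lambda>_. D)"
  interpret M: prob_space M unfolding M_def by (intro prob_space_PiM D)
  define K where "K = ln (card I) + ln (1 / \<delta>)"
  define bad where "bad = (\<lambda>i. {S\<in>space M.
     1.01 * (\<Sum>k<n. g i (S k)) / real n + 101 * K / real n < (\<integral>z. g i z \<partial>D)})"
  have bad_sets: "bad i \<in> sets M" if "i \<in> I" for i
    using g[OF that] unfolding bad_def M_def by measurable
  have bad_measure: "measure M (bad i) \<le> exp (- K)" if "i \<in> I" for i
    unfolding bad_def M_def
    by (rule measure_PiM_mean_exceeds_empirical[OF D g[OF that] g_range[OF that] n])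
  have E_eq: "E = space M - (\<Union>i\<in>I. bad i)"
    unfolding E_def bad_def M_def K_def by (auto simp: not_less)
  have "measure M (\<Union>i\<in>I. bad i) \<le> (\<Sum>i\<in>I. measure M (bad i))"
    using bad_sets I by (intro measure_UNION_le) auto
  also have "\<dots> \<le> real (card I) * exp (- K)"
    using sum_mono[of I "\<lambda>i. measure M (bad i)" "\<lambda>_. exp (- K)"] bad_measure by simp
  also have "\<dots> \<le> \<delta>"
    using \<delta> by (cases "card I = 0") (simp_all add: K_def exp_minus exp_add ln_div exp_diff)
  finally have "measure M (\<Union>i\<in>I. bad i) \<le> \<delta>" .
  moreover have "(\<Union>i\<in>I. bad i) \<in> sets M" using bad_sets I by (intro sets.finite_UN) auto
  ultimately show "E \<in> sets (PiM {..<n} (\<lambda>_. D))" "measure (PiM {..<n} (\<lambda>_. D)) E \<ge> 1 - \<delta>"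
    unfolding E_eq M_def[symmetric] by (auto simp: M.prob_compl)
qed


text \<open>The distance of the label from the bracket [l x, u x], truncated at 1 so that it is
  [0,1]-valued even for labels outside [0,1].\<close>
definition bracket_excess :: "('a \<Rightarrow> real) \<Rightarrow> ('a \<Rightarrow> real) \<Rightarrow> 'a \<times> real \<Rightarrow> real" where
  "bracket_excess l u z = min 1 (max 0 (max (l (fst z) - snd z) (snd z - u (fst z))))"

lemma bracket_excess_bounds: "0 \<le> bracket_excess l u z \<and> bracket_excess l u z \<le> 1"
  unfolding bracket_excess_def by auto

lemma bracket_excess_le_abs:
  assumes "l (fst z) \<le> f (fst z)" "f (fst z) \<le> u (fst z)"
  shows "bracket_excess l u z \<le> \<bar>f (fst z) - snd z\<bar>"
  using assms unfolding bracket_excess_def by (auto simp: min_def max_def abs_if)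

lemma abs_le_bracket_excess_add_width:
  assumes "l (fst z) \<le> f (fst z)" "f (fst z) \<le> u (fst z)" "0 \<le> l (fst z)" "u (fst z) \<le> 1"
    and "0 \<le> snd z" "snd z \<le> 1"
  shows "\<bar>f (fst z) - snd z\<bar> \<le> bracket_excess l u z + \<bar>u (fst z) - l (fst z)\<bar>"
  using assms unfolding bracket_excess_def by (auto simp: min_def max_def abs_if)

lemma measurable_fst_borel:
  assumes "sets D = sets (borel :: ('a::topological_space \<times> 'b::topological_space) measure)"
  shows "fst \<in> measurable D borel"
  using borel_measurable_continuous_onI[OF continuous_on_fst[OF continuous_on_id]]
    measurable_cong_sets[OF assms refl] by blast

lemma measurable_snd_borel:
  assumes "sets D = sets (borel :: ('a::topological_space \<times> 'b::topological_space) measure)"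
  shows "snd \<in> measurable D borel"
  using borel_measurable_continuous_onI[OF continuous_on_snd[OF continuous_on_id]]
    measurable_cong_sets[OF assms refl] by blast

lemma borel_measurable_comp_fst_borel:
  fixes h :: "'a::topological_space \<Rightarrow> real"
  assumes "sets D = sets (borel :: ('a \<times> 'b::topological_space) measure)"
    and "h \<in> borel_measurable borel"
  shows "(\<lambda>z. h (fst z)) \<in> borel_measurable D"
  using measurable_compose[OF measurable_fst_borel[OF assms(1)] assms(2)] by (simp add: o_def)

lemma borel_measurable_bracket_excess:
  fixes l u :: "'a::topological_space \<Rightarrow> real"
  assumes "sets D = sets (borel :: ('a \<times> real) measure)"
    and "l \<in> borel_measurable borel" "u \<in> borel_measurable borel"
  shows "bracket_excess l u \<in> borel_measurable D"
proof -
  note [measurable] = measurable_snd_borel[OF assms(1)]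
    borel_measurable_comp_fst_borel[OF assms(1,2)] borel_measurable_comp_fst_borel[OF assms(1,3)]
  show ?thesis unfolding bracket_excess_def[abs_def] by measurable
qed

lemma emp_loss_ge_bracket_excess:
  assumes "\<And>x. l x \<le> f x \<and> f x \<le> u x"
  shows "(\<Sum>i<n. bracket_excess l u (S i)) / real n \<le> emp_loss n S f"
  unfolding emp_loss_def using assms
  by (intro divide_right_mono sum_mono bracket_excess_le_abs) auto

lemma pop_loss_le_bracket_excess_add_width:
  fixes D :: "('a::topological_space \<times> real) measure"
  assumes D: "prob_space D" and D_sets: "sets D = sets borel"
    and D_range: "AE z in D. 0 \<le> snd z \<and> snd z \<le> 1"
    and f: "f \<in> borel_measurable borel"
    and l: "l \<in> borel_measurable borel" and u: "u \<in> borel_measurable borel"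
    and lu_range: "\<And>x. 0 \<le> l x \<and> u x \<le> 1" and bracket: "\<And>x. l x \<le> f x \<and> f x \<le> u x"
  shows "pop_loss D f \<le> (\<integral>z. bracket_excess l u z \<partial>D) + (\<integral>x. \<bar>u x - l x\<bar> \<partial>distr D borel fst)"
proof -
  interpret D: prob_space D by (rule D)
  note [measurable] = measurable_snd_borel[OF D_sets] borel_measurable_bracket_excess[OF D_sets l u]
    borel_measurable_comp_fst_borel[OF D_sets f] borel_measurable_comp_fst_borel[OF D_sets l]
    borel_measurable_comp_fst_borel[OF D_sets u]
  have int_loss: "integrable D (\<lambda>z. \<bar>f (fst z) - snd z\<bar>)"
  proof (rule D.integrable_const_bound[where B=1])
    show "AE z in D. norm \<bar>f (fst z) - snd z\<bar> \<le> 1"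
      using D_range
    proof eventually_elim
      case (elim z)
      moreover have "0 \<le> f (fst z) \<and> f (fst z) \<le> 1"
        using lu_range[of "fst z"] bracket[of "fst z"] by linarith
      ultimately show ?case by auto
    qed
  qed simp
  have int_excess: "integrable D (bracket_excess l u)"
    by (rule D.integrable_const_bound[where B=1]) (simp_all add: bracket_excess_bounds abs_le_iff)
  have int_width: "integrable D (\<lambda>z. \<bar>u (fst z) - l (fst z)\<bar>)"
  proof (rule D.integrable_const_bound[where B=1])
    have "\<bar>u x - l x\<bar> \<le> 1" for x using lu_range[of x] bracket[of x] by arith
    thus "AE z in D. norm \<bar>u (fst z) - l (fst z)\<bar> \<le> 1" by simp
  qed simp
  have "pop_loss D f \<le> (\<integral>z. bracket_excess l u z + \<bar>u (fst z) - l (fst z)\<bar> \<partial>D)"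
    unfolding pop_loss_def
  proof (rule integral_mono_AE[OF int_loss])
    show "AE z in D. \<bar>f (fst z) - snd z\<bar> \<le> bracket_excess l u z + \<bar>u (fst z) - l (fst z)\<bar>"
      using D_range
      by eventually_elim (use lu_range bracket abs_le_bracket_excess_add_width in blast)
  qed (use int_excess int_width in auto)
  also have "\<dots> = (\<integral>z. bracket_excess l u z \<partial>D) + (\<integral>x. \<bar>u x - l x\<bar> \<partial>distr D borel fst)"
    using int_excess int_width l u by (subst integral_distr[OF measurable_fst_borel[OF D_sets]]) auto
  finally show ?thesis .
qed

text \<open>This includes k = 0, since ln 0 = 0; an empty bracket cover therefore does no harm.\<close>
lemma ln_of_nat_nonneg: "0 \<le> ln (real k)"
  by (cases k) auto

lemma bracket_cover_trivial:
  assumes "prob_space \<mu>" and "\<And>f x. f \<in> F \<Longrightarrow> 0 \<le> f x \<and> f x \<le> 1"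
  shows "bracket_cover \<mu> F 1 {(\<lambda>_. 0, \<lambda>_. 1)}"
  using assms unfolding bracket_cover_def by (auto simp: prob_space.prob_space)

lemma bracketing_number_attained:
  assumes "bracket_cover \<mu> F \<alpha> B\<^sub>0"
  obtains B where "bracket_cover \<mu> F \<alpha> B" "card B = bracketing_number \<mu> F \<alpha>"
proof -
  have "\<exists>k B. bracket_cover \<mu> F \<alpha> B \<and> card B = k" using assms by blast
  from LeastI_ex[OF this] show ?thesis by (rule exE) (auto simp: bracketing_number_def intro: that)
qed

lemma bracket_complexity_approx:
  assumes "prob_space \<mu>" and "\<And>f x. f \<in> F \<Longrightarrow> 0 \<le> f x \<and> f x \<le> 1"
    and "0 \<le> c" and "0 < \<eta>"
  obtains \<alpha> B where "bracket_cover \<mu> F \<alpha> B"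
    and "\<alpha> + c * ln (card B) / real n < bracket_complexity \<mu> F c n + \<eta>"
proof -
  define A where "A = {\<alpha>. 0 \<le> \<alpha> \<and> (\<exists>B. bracket_cover \<mu> F \<alpha> B)}"
  define \<phi> where "\<phi> \<alpha> = \<alpha> + c * ln (real (bracketing_number \<mu> F \<alpha>)) / real n" for \<alpha>
  have "1 \<in> A" unfolding A_def using bracket_cover_trivial[of \<mu> F] assms(1,2) by auto
  moreover have "bdd_below (\<phi> ` A)"
  proof (rule bdd_belowI2)
    fix \<alpha> assume "\<alpha> \<in> A"
    thus "0 \<le> \<phi> \<alpha>" unfolding A_def \<phi>_def using assms(3) ln_of_nat_nonneg by auto
  qed
  moreover have "Inf (\<phi> ` A) < bracket_complexity \<mu> F c n + \<eta>"
    unfolding bracket_complexity_def A_def \<phi>_def using assms(4) by simp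
  ultimately obtain \<alpha> where "\<alpha> \<in> A" "\<phi> \<alpha> < bracket_complexity \<mu> F c n + \<eta>"
    using cInf_lessD[of "\<phi> ` A"] by blast
  then obtain B where "bracket_cover \<mu> F \<alpha> B" "card B = bracketing_number \<mu> F \<alpha>"
    "\<alpha> + c * ln (card B) / real n < bracket_complexity \<mu> F c n + \<eta>"
    unfolding A_def \<phi>_def by (auto elim: bracketing_number_attained)
  thus ?thesis using that by blast
qed

lemma bracket_cover_uniform_event:
  fixes D :: "('a::metric_space \<times> real) measure"
  assumes D: "prob_space D" and D_sets: "sets D = sets borel"
    and cover: "bracket_cover \<mu> F \<alpha> B" and n: "n \<ge> 1" and \<delta>: "0 < \<delta>"
  obtains E where "E \<in> sets (PiM {..<n} (\<lambda>_. D))" "measure (PiM {..<n} (\<lambda>_. D)) E \<ge> 1 - \<delta>"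
    and "\<And>S l u. S \<in> E \<Longrightarrow> (l, u) \<in> B \<Longrightarrow> (\<integral>z. bracket_excess l u z \<partial>D)
           \<le> 1.01 * (\<Sum>k<n. bracket_excess l u (S k)) / real n
             + 101 * (ln (card B) + ln (1 / \<delta>)) / real n"
proof -
  have B: "finite B" "\<And>l u. (l, u) \<in> B \<Longrightarrow> l \<in> borel_measurable borel \<and> u \<in> borel_measurable borel"
    using cover unfolding bracket_cover_def by auto
  have excess_meas: "case_prod bracket_excess b \<in> borel_measurable D" if "b \<in> B" for b
    using B(2) that by (cases b) (simp add: borel_measurable_bracket_excess[OF D_sets])
  have excess_range: "0 \<le> case_prod bracket_excess b z \<and> case_prod bracket_excess b z \<le> 1" for b z
    by (cases b) (simp add: bracket_excess_bounds)
  note E = measure_PiM_uniform_mean_le_empirical[where g = "case_prod bracket_excess",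
      OF D B(1) excess_meas excess_range n \<delta>]
  show ?thesis by (rule that[OF E]) auto
qed

lemma pop_loss_le_emp_loss_of_bracket_cover:
  fixes D :: "('a::metric_space \<times> real) measure"
  assumes D: "prob_space D" and D_sets: "sets D = sets borel"
    and D_range: "AE z in D. 0 \<le> snd z \<and> snd z \<le> 1"
    and cover: "bracket_cover (distr D borel fst) F \<alpha> B"
    and f: "f \<in> F" "f \<in> borel_measurable borel"
    and deviation: "\<And>l u. (l, u) \<in> B \<Longrightarrow>
          (\<integral>z. bracket_excess l u z \<partial>D) \<le> 1.01 * (\<Sum>k<n. bracket_excess l u (S k)) / real n + r"
  shows "pop_loss D f \<le> 1.01 * emp_loss n S f + \<alpha> + r"
proof -
  obtain l u where lu: "(l, u) \<in> B" and bracket: "\<And>x. l x \<le> f x \<and> f x \<le> u x"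
    and l: "l \<in> borel_measurable borel" and u: "u \<in> borel_measurable borel"
    and lu_range: "\<And>x. 0 \<le> l x \<and> u x \<le> 1"
    and width: "(\<integral>x. \<bar>u x - l x\<bar> \<partial>distr D borel fst) \<le> \<alpha>"
    using cover f(1) unfolding bracket_cover_def by fast
  have "pop_loss D f \<le> (\<integral>z. bracket_excess l u z \<partial>D) + (\<integral>x. \<bar>u x - l x\<bar> \<partial>distr D borel fst)"
    by (rule pop_loss_le_bracket_excess_add_width[OF D D_sets D_range f(2) l u lu_range bracket])
  moreover have "(\<Sum>k<n. bracket_excess l u (S k)) / real n \<le> emp_loss n S f"
    by (rule emp_loss_ge_bracket_excess) (rule bracket)
  ultimately show ?thesis using deviation[OF lu] width by simp
qed

theorem proposition2:
  fixes D :: "('a::metric_space \<times> real) measure"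
    and F :: "('a \<Rightarrow> real) set"
    and \<delta> :: real and n :: nat
  assumes D_prob: "prob_space D"
    and D_sets: "sets D = sets borel"
    and D_range: "AE z in D. 0 \<le> snd z \<and> snd z \<le> 1"
    and F_meas: "\<And>f. f \<in> F \<Longrightarrow> f \<in> borel_measurable borel"
    and F_range: "\<And>f x. f \<in> F \<Longrightarrow> 0 \<le> f x \<and> f x \<le> 1"
    and realizable: "\<exists>f\<in>F. pop_loss D f = 0"
    and \<delta>: "0 < \<delta>" "\<delta> < 1"
    and n: "n \<ge> 1"
  shows "\<exists>E \<in> sets (PiM {..<n} (\<lambda>_. D)).
           measure (PiM {..<n} (\<lambda>_. D)) E \<ge> 1 - \<delta> \<and>
           (\<forall>S\<in>E. \<forall>f\<in>F.
              pop_loss D f \<le> 1.01 * emp_loss n S f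
                + bracket_complexity (distr D borel fst) F 205 n
                + 205 * ln (1 / \<delta>) / real n)"
proof -
  define \<mu> where "\<mu> = distr D borel (fst :: 'a \<times> real \<Rightarrow> 'a)"
  have "prob_space \<mu>"
    unfolding \<mu>_def by (intro prob_space.prob_space_distr D_prob measurable_fst_borel D_sets)
  \<comment> \<open>The infimum need not be attained; the slack 104 ln(1/\<delta>)/n is what remains of the
    final 205 ln(1/\<delta>)/n after the union bound has used 101 ln(1/\<delta>)/n.\<close>
  then obtain \<alpha> B where cover: "bracket_cover \<mu> F \<alpha> B" and \<alpha>:
    "\<alpha> + 205 * ln (card B) / real n < bracket_complexity \<mu> F 205 n + 104 * ln (1 / \<delta>) / real n"
    using bracket_complexity_approx[of \<mu> F 205 "104 * ln (1 / \<delta>) / real n" n] F_range \<delta> n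
    by auto
  obtain E where E: "E \<in> sets (PiM {..<n} (\<lambda>_. D))" "measure (PiM {..<n} (\<lambda>_. D)) E \<ge> 1 - \<delta>"
    and deviation: "\<And>S l u. S \<in> E \<Longrightarrow> (l, u) \<in> B \<Longrightarrow> (\<integral>z. bracket_excess l u z \<partial>D)
      \<le> 1.01 * (\<Sum>k<n. bracket_excess l u (S k)) / real n + 101 * (ln (card B) + ln (1 / \<delta>)) / real n"
    using bracket_cover_uniform_event[OF D_prob D_sets cover n \<delta>(1)] by blast
  have "101 * ln (card B) / real n \<le> 205 * ln (card B) / real n"
    by (intro divide_right_mono mult_right_mono) (auto simp: ln_of_nat_nonneg)
  moreover have "pop_loss D f \<le> 1.01 * emp_loss n S f + \<alpha> + 101 * (ln (card B) + ln (1 / \<delta>)) / real n"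
    if "S \<in> E" "f \<in> F" for S f
    using pop_loss_le_emp_loss_of_bracket_cover[OF D_prob D_sets D_range cover[unfolded \<mu>_def]]
      that F_meas deviation by blast
  ultimately show ?thesis
    using E \<alpha> unfolding \<mu>_def by (fastforce simp: add_divide_distrib distrib_left)
qed

end
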